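(* Let $D=(V,A)$ be a Steiner rooted $k$-arc-connected directed graph with root $r\in V$ and terminal set $S\subseteq V\setminus\{r\}$. (a) Let $s\in S$ and let $\mathcal{U}$ be a nonempty family of tight $s$-cuts. Then both $\bigcap_{U\in\mathcal{U}}U$ and $\bigcup_{U\in\mathcal{U}}U$ are tight $s$-cuts. (b) Let $S'\subseteq S$ be nonempty and, for each $s\in S'$, let $U_s$ be a tight $s$-cut. Suppose there is $s_0\in S'$ such that the number of arcs leaving $U_s\cup U_{s_0}$ is at least $k$ for all $s\in S'\setminus\{s_0\}$. Then $\bigcap_{s\in S'}U_s$ is a tight $s$-cut for every $s\in S'$.
   Context: $D$ is Steiner rooted $k$-arc-connected if for every $s\in S$ there are $k$ pairwise arc-disjoint directed $r$-$s$ paths. For $s\in S$, $U\subseteq V$ is an $s$-cut if $r\in U$ and $s\notin U$, and a tight $s$-cut if moreover exactly $k$ arcs of $D$ leave $U$. *)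

theory Defs
  imports "Graph_Theory.Graph_Theory"
begin

definition leaving :: "('a,'b) pre_digraph \<Rightarrow> 'a set \<Rightarrow> 'b set" where
  "leaving G U = {a \<in> arcs G. tail G a \<in> U \<and> head G a \<notin> U}"

definition steiner_rooted_k_arc_connected ::
  "('a,'b) pre_digraph \<Rightarrow> 'a \<Rightarrow> 'a set \<Rightarrow> nat \<Rightarrow> bool" where
  "steiner_rooted_k_arc_connected G r S k \<longleftrightarrow>
     r \<in> verts G \<and> S \<subseteq> verts G - {r} \<and>
     (\<forall>s\<in>S. \<exists>ps :: 'b list list. length ps = k \<and>
        (\<forall>i<k. pre_digraph.apath G r (ps ! i) s) \<and>
        (\<forall>i<k. \<forall>j<k. i \<noteq> j \<longrightarrow> set (ps ! i) \<inter> set (ps ! j) = {}))"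

definition s_cut :: "('a,'b) pre_digraph \<Rightarrow> 'a \<Rightarrow> 'a \<Rightarrow> 'a set \<Rightarrow> bool" where
  "s_cut G r s U \<longleftrightarrow> U \<subseteq> verts G \<and> r \<in> U \<and> s \<notin> U"

definition tight_s_cut :: "('a,'b) pre_digraph \<Rightarrow> 'a \<Rightarrow> nat \<Rightarrow> 'a \<Rightarrow> 'a set \<Rightarrow> bool" where
  "tight_s_cut G r k s U \<longleftrightarrow> s_cut G r s U \<and> card (leaving G U) = k"

end

theory Submission
  imports Defs
begin

text \<open>The cut function \<open>U \<mapsto> card (leaving G U)\<close> is submodular, and by the easy direction
  of Menger's theorem every \<open>s\<close>-cut is left by at least \<open>k\<close> arcs. If \<open>X\<close> and \<open>Y\<close> are tight
  \<open>s\<close>-cuts, then \<open>X \<inter> Y\<close> and \<open>X \<union> Y\<close> are \<open>s\<close>-cuts whose cut values are each at least \<open>k\<close>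
  but sum to at most \<open>2k\<close>, so both are tight; (a) follows by induction over the finite family.
  In (b), \<open>U\<^sub>s \<inter> U\<^sub>s\<^sub>0\<close> is an \<open>s\<close>-cut and \<open>U\<^sub>s \<union> U\<^sub>s\<^sub>0\<close> is left by at least \<open>k\<close>
  arcs by hypothesis, so the same uncrossing makes each \<open>U\<^sub>s \<inter> U\<^sub>s\<^sub>0\<close> a tight
  \<open>s\<^sub>0\<close>-cut. By (a) their intersection is left by exactly \<open>k\<close> arcs, and it avoids every
  \<open>s \<in> S'\<close>.\<close>

context wf_digraph
begin

lemma awalk_leaving:
  assumes "awalk u p v" "u \<in> U" "v \<notin> U"
  shows "\<exists>e\<in>set p. e \<in> leaving G U"
  using assms
proof (induction p arbitrary: u)
  case Nil
  then show ?case by (simp add: awalk_Nil_iff)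
next
  case (Cons e es)
  then have "e \<in> arcs G" "u = tail G e" "awalk (head G e) es v"
    by (simp_all add: awalk_Cons_iff)
  with Cons show ?case
    by (cases "head G e \<in> U") (auto simp: leaving_def)
qed

end

context fin_digraph
begin

lemma finite_leaving: "finite (leaving G U)"
  unfolding leaving_def by simp

lemma card_leaving_ge_disjoint_awalks:
  assumes walks: "\<And>i. i \<in> I \<Longrightarrow> awalk u (p i) v"
    and disjoint: "\<And>i j. i \<in> I \<Longrightarrow> j \<in> I \<Longrightarrow> i \<noteq> j \<Longrightarrow> set (p i) \<inter> set (p j) = {}"
    and "u \<in> U" "v \<notin> U"
  shows "card I \<le> card (leaving G U)"
proof -
  have "\<exists>e. e \<in> set (p i) \<and> e \<in> leaving G U" if "i \<in> I" for i
    using awalk_leaving[OF walks[OF that] \<open>u \<in> U\<close> \<open>v \<notin> U\<close>] by blast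
  then obtain f where f: "\<And>i. i \<in> I \<Longrightarrow> f i \<in> set (p i) \<and> f i \<in> leaving G U"
    by metis
  have "inj_on f I"
  proof (rule inj_onI)
    fix i j
    assume "i \<in> I" "j \<in> I" "f i = f j"
    then show "i = j"
      using f disjoint by (metis disjoint_iff)
  qed
  moreover have "f ` I \<subseteq> leaving G U"
    using f by blast
  ultimately show ?thesis
    by (rule card_inj_on_le[OF _ _ finite_leaving])
qed

lemma card_leaving_submodular:
  "card (leaving G (X \<inter> Y)) + card (leaving G (X \<union> Y)) \<le> card (leaving G X) + card (leaving G Y)"
proof -
  have card_eq: "card (leaving G Z) = (\<Sum>a\<in>arcs G. if tail G a \<in> Z \<and> head G a \<notin> Z then 1 else 0)"
    for Z
    unfolding leaving_def by (simp add: sum.If_cases Int_def)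
  have "(\<Sum>a\<in>arcs G. (if tail G a \<in> X \<inter> Y \<and> head G a \<notin> X \<inter> Y then 1 else 0) +
          (if tail G a \<in> X \<union> Y \<and> head G a \<notin> X \<union> Y then 1 else 0))
     \<le> (\<Sum>a\<in>arcs G. (if tail G a \<in> X \<and> head G a \<notin> X then 1 else 0) +
          (if tail G a \<in> Y \<and> head G a \<notin> Y then 1 else (0::nat)))"
    by (rule sum_mono) auto
  then show ?thesis
    unfolding card_eq by (simp add: sum.distrib)
qed

lemma card_leaving_Int_Un_eq:
  assumes "card (leaving G X) = k" "card (leaving G Y) = k"
    and "k \<le> card (leaving G (X \<inter> Y))" "k \<le> card (leaving G (X \<union> Y))"
  shows "card (leaving G (X \<inter> Y)) = k" "card (leaving G (X \<union> Y)) = k"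
  using card_leaving_submodular[of X Y] assms by linarith+

end

lemma steiner_card_leaving_ge:
  assumes "fin_digraph G" "steiner_rooted_k_arc_connected G r S k" "s \<in> S" "s_cut G r s U"
  shows "k \<le> card (leaving G U)"
proof -
  interpret fin_digraph G by fact
  obtain ps :: "'b list list" where "length ps = k" and paths: "\<forall>i<k. apath r (ps ! i) s"
    and disjoint: "\<forall>i<k. \<forall>j<k. i \<noteq> j \<longrightarrow> set (ps ! i) \<inter> set (ps ! j) = {}"
    using assms(2,3) unfolding steiner_rooted_k_arc_connected_def by blast
  have "card {..<k} \<le> card (leaving G U)"
    using assms(4) paths disjoint unfolding s_cut_def apath_def
    by (intro card_leaving_ge_disjoint_awalks[where u = r and p = "(!) ps" and v = s]) auto
  then show ?thesis by simp
qed

lemma tight_s_cut_Int_Un: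
  assumes "fin_digraph G" "steiner_rooted_k_arc_connected G r S k" "s \<in> S"
    and "tight_s_cut G r k s X" "tight_s_cut G r k s Y"
  shows "tight_s_cut G r k s (X \<inter> Y)" "tight_s_cut G r k s (X \<union> Y)"
proof -
  have cuts: "s_cut G r s (X \<inter> Y)" "s_cut G r s (X \<union> Y)"
    using assms(4,5) unfolding tight_s_cut_def s_cut_def by auto
  have "k \<le> card (leaving G (X \<inter> Y))" "k \<le> card (leaving G (X \<union> Y))"
    using steiner_card_leaving_ge[OF assms(1-3)] cuts by blast+
  then have "card (leaving G (X \<inter> Y)) = k" "card (leaving G (X \<union> Y)) = k"
    using fin_digraph.card_leaving_Int_Un_eq[OF assms(1)] assms(4,5)
    unfolding tight_s_cut_def by blast+
  with cuts show "tight_s_cut G r k s (X \<inter> Y)" "tight_s_cut G r k s (X \<union> Y)"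
    unfolding tight_s_cut_def by simp_all
qed

lemma tight_s_cut_Inter_Union:
  assumes "fin_digraph G" "steiner_rooted_k_arc_connected G r S k" "s \<in> S"
    and "\<U> \<noteq> {}" "\<forall>U\<in>\<U>. tight_s_cut G r k s U"
  shows "tight_s_cut G r k s (\<Inter>\<U>) \<and> tight_s_cut G r k s (\<Union>\<U>)"
proof -
  have "\<U> \<subseteq> Pow (verts G)"
    using assms(5) unfolding tight_s_cut_def s_cut_def by blast
  then have "finite \<U>"
    using fin_digraph.finite_verts[OF assms(1)] by (meson finite_Pow_iff finite_subset)
  then show ?thesis
    using assms(4,5)
  proof (induction \<U> rule: finite_ne_induct)
    case (singleton U)
    then show ?case by simp
  next
    case (insert U \<U>)
    then show ?case
      using tight_s_cut_Int_Un[OF assms(1-3), of U] by simp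
  qed
qed

lemma tight_s_cut_Int:
  assumes "fin_digraph G" "steiner_rooted_k_arc_connected G r S k" "t \<in> S"
    and "tight_s_cut G r k t X" "tight_s_cut G r k s Y" "k \<le> card (leaving G (X \<union> Y))"
  shows "tight_s_cut G r k s (X \<inter> Y)"
proof -
  have "s_cut G r t (X \<inter> Y)"
    using assms(4,5) unfolding tight_s_cut_def s_cut_def by auto
  then have "k \<le> card (leaving G (X \<inter> Y))"
    by (rule steiner_card_leaving_ge[OF assms(1-3)])
  then have "card (leaving G (X \<inter> Y)) = k"
    using fin_digraph.card_leaving_Int_Un_eq(1)[OF assms(1)] assms(4-6)
    unfolding tight_s_cut_def by blast
  moreover have "s_cut G r s (X \<inter> Y)"
    using assms(4,5) unfolding tight_s_cut_def s_cut_def by auto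
  ultimately show ?thesis
    unfolding tight_s_cut_def by simp
qed

lemma tight_s_cut_INT:
  assumes "fin_digraph G" "steiner_rooted_k_arc_connected G r S k" "S' \<subseteq> S" "s0 \<in> S'"
    and tight: "\<forall>s\<in>S'. tight_s_cut G r k s (U s)"
    and union: "\<forall>s\<in>S' - {s0}. k \<le> card (leaving G (U s \<union> U s0))"
    and "s \<in> S'"
  shows "tight_s_cut G r k s (\<Inter>s'\<in>S'. U s')"
proof -
  define \<V> where "\<V> = insert (U s0) ((\<lambda>t. U t \<inter> U s0) ` (S' - {s0}))"
  have "tight_s_cut G r k s0 (U t \<inter> U s0)" if "t \<in> S' - {s0}" for t
    using that assms(3,4) tight union by (intro tight_s_cut_Int[OF assms(1,2), where t = t]) auto
  with tight assms(4) have "\<forall>V\<in>\<V>. tight_s_cut G r k s0 V"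
    unfolding \<V>_def by auto
  moreover have "\<V> \<noteq> {}" "s0 \<in> S"
    unfolding \<V>_def using assms(3,4) by auto
  ultimately have "tight_s_cut G r k s0 (\<Inter>\<V>)"
    using tight_s_cut_Inter_Union[OF assms(1,2)] by blast
  moreover have "\<Inter>\<V> = (\<Inter>s'\<in>S'. U s')"
    unfolding \<V>_def using assms(4) by auto
  moreover have "s_cut G r s (\<Inter>s'\<in>S'. U s')"
    using tight assms(4,7) unfolding tight_s_cut_def s_cut_def by blast
  ultimately show ?thesis
    unfolding tight_s_cut_def by simp
qed

theorem lemma2p9:
  fixes G :: "('a,'b) pre_digraph" and r :: 'a and S :: "'a set" and k :: nat
  assumes "fin_digraph G"
    and "steiner_rooted_k_arc_connected G r S k"
  shows "(\<forall>s \<in> S. \<forall>\<U> :: 'a set set. \<U> \<noteq> {} \<and> (\<forall>U\<in>\<U>. tight_s_cut G r k s U) \<longrightarrow>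
            tight_s_cut G r k s (\<Inter>\<U>) \<and> tight_s_cut G r k s (\<Union>\<U>))
     \<and> (\<forall>S' (U :: 'a \<Rightarrow> 'a set) s0. S' \<subseteq> S \<and> S' \<noteq> {} \<and>
            (\<forall>s\<in>S'. tight_s_cut G r k s (U s)) \<and> s0 \<in> S' \<and>
            (\<forall>s\<in>S' - {s0}. card (leaving G (U s \<union> U s0)) \<ge> k) \<longrightarrow>
            (\<forall>s\<in>S'. tight_s_cut G r k s (\<Inter>s'\<in>S'. U s')))"
  using tight_s_cut_Inter_Union[OF assms] tight_s_cut_INT[OF assms]
  by (intro conjI allI impI ballI) auto

end
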